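(* Let $\nu\in\mathbb{N}$ and $p\in(0,1)$, and let $G_\nu,g_\nu$ be the c.d.f. and p.d.f. of Student's $t$-distribution with $\nu$ degrees of freedom. For $k\in\mathbb{N}$ let $h_k^{(2)}$ be the unique real solution $h$ of $\Big[\int_{-\infty}^{\infty}G_\nu(t+h)g_\nu(t)\,dt\Big]^k=p$. Let $q_p$ be the $p$-th quantile of the $\nu$-Fréchet distribution (c.d.f. $x\mapsto\exp(-x^{-\nu})$ for $x>0$), and let $$\gamma_\nu:=\Bigg[\frac{\Gamma(\frac{\nu+1}{2})}{\nu^{1-\frac{\nu}{2}}\sqrt{\pi}\,\Gamma(\frac{\nu}{2})}\Bigg]^{1/\nu}.$$ Then $h_k^{(2)}\sim2^{1/\nu}\gamma_\nu k^{1/\nu}q_p$ as $k\to\infty$.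
   Context: $a_k\sim b_k$ means $a_k/b_k\to1$ as $k\to\infty$. *)

theory Defs
  imports "HOL-Analysis.Analysis" "HOL-Library.Landau_Symbols"
begin

definition student_t_pdf :: "nat \<Rightarrow> real \<Rightarrow> real" where
  "student_t_pdf \<nu> t =
     Gamma ((real \<nu> + 1) / 2) / (sqrt (real \<nu> * pi) * Gamma (real \<nu> / 2))
     * (1 + t\<^sup>2 / real \<nu>) powr (- (real \<nu> + 1) / 2)"

definition student_t_cdf :: "nat \<Rightarrow> real \<Rightarrow> real" where
  "student_t_cdf \<nu> x = (LBINT t:{..x}. student_t_pdf \<nu> t)"

definition h2 :: "nat \<Rightarrow> real \<Rightarrow> nat \<Rightarrow> real" where
  "h2 \<nu> p k = (THE h. (LINT t|lborel. student_t_cdf \<nu> (t + h) * student_t_pdf \<nu> t) ^ k = p)"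

definition frechet_quantile :: "nat \<Rightarrow> real \<Rightarrow> real" where
  "frechet_quantile \<nu> p = (THE q. q > 0 \<and> exp (- (q powr (- real \<nu>))) = p)"

definition gamma_nu :: "nat \<Rightarrow> real" where
  "gamma_nu \<nu> = (Gamma ((real \<nu> + 1) / 2) /
      (real \<nu> powr (1 - real \<nu> / 2) * sqrt pi * Gamma (real \<nu> / 2))) powr (1 / real \<nu>)"

end

(*
  Let S, T be independent with a density f whose upper tail G satisfies G(x) x^a --> K.
  Splitting according to which of S, T exceeds h/2 gives the exact identity
    P(S + T > h) = 2 P(S + T > h, T <= h/2) + G(h/2)^2,
  and since G(h - t) / G(h) --> 1, boundedly for t <= h/2, dominated convergence yields
  P(S + T > h, T <= h/2) ~ G(h); hence P(S + T > h) ~ 2 K h^(-a).  For Student's t-density,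
  which decays like t^(-(nu+1)), one gets a = nu and K = gamma_nu^nu.  By symmetry the integral
  defining h_k^(2) equals 1 - P(S + T > h), so h_k^(2) solves P(S + T > h) = 1 - p^(1/k) ~ -ln p / k,
  and inverting the power asymptotics gives h_k^(2) ~ (2 gamma_nu^nu k / (-ln p))^(1/nu),
  which is the claim because q_p = (-ln p)^(-1/nu).
*)

theory Submission
  imports Defs "HOL-Probability.Probability" "HOL-Real_Asymp.Real_Asymp"
begin

lemma lborel_integral_pos:
  fixes f :: "real \<Rightarrow> real"
  assumes f: "integrable lborel f" "\<And>x. 0 \<le> f x" and pos: "\<And>x. x \<in> {a<..b} \<Longrightarrow> 0 < f x"
    and "a < b"
  shows "0 < integral\<^sup>L lborel f"
proof -
  have "integral\<^sup>L lborel f \<noteq> 0"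
  proof
    assume "integral\<^sup>L lborel f = 0"
    then have "AE x in lborel. f x = 0"
      using f by (subst (asm) integral_nonneg_eq_0_iff_AE) auto
    then have "AE x in lborel. \<not> x \<in> {a<..b}"
      by (rule eventually_mono) (use pos in force)
    then have "emeasure lborel {a<..b} = 0"
      by (subst (asm) AE_iff_measurable[of "{a<..b}"]) auto
    then show False using \<open>a < b\<close> by simp
  qed
  moreover have "0 \<le> integral\<^sup>L lborel f"
    using f by (intro integral_nonneg_AE AE_I2) auto
  ultimately show ?thesis by simp
qed

lemma nn_integral_lborel_nested_add:
  fixes g1 g2 :: "real \<Rightarrow> real \<Rightarrow> ennreal"
  assumes [measurable]: "case_prod g1 \<in> borel_measurable (lborel \<Otimes>\<^sub>M lborel)"
    "case_prod g2 \<in> borel_measurable (lborel \<Otimes>\<^sub>M lborel)"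
  shows "(\<integral>\<^sup>+t. \<integral>\<^sup>+s. g1 t s + g2 t s \<partial>lborel \<partial>lborel)
       = (\<integral>\<^sup>+t. \<integral>\<^sup>+s. g1 t s \<partial>lborel \<partial>lborel) + (\<integral>\<^sup>+t. \<integral>\<^sup>+s. g2 t s \<partial>lborel \<partial>lborel)"
proof -
  have [measurable]: "g1 t \<in> borel_measurable lborel" "g2 t \<in> borel_measurable lborel" for t
    using measurable_Pair2[OF assms(1), of t] measurable_Pair2[OF assms(2), of t] by simp_all
  show ?thesis
    by (simp add: nn_integral_add)
qed

lemma nn_integral_powr_tail:
  fixes a x :: real
  assumes "0 < a" "0 < x"
  shows "(\<integral>\<^sup>+s. ennreal (indicator {x<..} s * s powr (- (a + 1))) \<partial>lborel) = ennreal (x powr (- a) / a)"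
proof -
  have "(\<integral>\<^sup>+s. ennreal (indicator {x<..} s * s powr (- (a + 1))) \<partial>lborel)
      = (\<integral>\<^sup>+s. ennreal (indicator {x..} s * s powr (- (a + 1))) \<partial>lborel)"
    by (intro nn_integral_cong_AE eventually_mono[OF AE_lborel_singleton[of x]])
       (auto simp: indicator_def)
  also have "\<dots> = ennreal (- (x powr (- (a + 1) + 1)) / (- (a + 1) + 1))"
    using assms by (intro nn_integral_has_integral_lebesgue has_integral_powr_to_inf) auto
  finally show ?thesis by simp
qed

lemma tendsto_zero_if_powr_mult_tendsto:
  fixes \<phi> :: "real \<Rightarrow> real"
  assumes "0 < a" and lim: "((\<lambda>x. \<phi> x * x powr a) \<longlongrightarrow> L) at_top"
  shows "(\<phi> \<longlongrightarrow> 0) at_top"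
proof -
  have "((\<lambda>x. \<phi> x * x powr a * x powr (- a)) \<longlongrightarrow> L * 0) at_top"
    using \<open>0 < a\<close> by (intro tendsto_intros lim) real_asymp
  moreover have "eventually (\<lambda>x. \<phi> x * x powr a * x powr (- a) = \<phi> x) at_top"
    using eventually_gt_at_top[of 0] by eventually_elim (simp add: powr_minus)
  ultimately show ?thesis by (simp add: tendsto_cong)
qed

locale real_density =
  fixes f :: "real \<Rightarrow> real"
  assumes borel_measurable_density [measurable]: "f \<in> borel_measurable borel"
    and density_nonneg: "\<And>x. 0 \<le> f x"
    and nn_integral_density: "(\<integral>\<^sup>+x. ennreal (f x) \<partial>lborel) = 1"
begin

lemma integrable_density: "integrable lborel f"
  using nn_integral_density density_nonneg by (intro integrableI_nonneg) auto

lemma integral_density: "(LINT x|lborel. f x) = 1"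
proof -
  have "ennreal (LINT x|lborel. f x) = 1"
    using nn_integral_density integrable_density density_nonneg
    by (subst nn_integral_eq_integral[symmetric]) auto
  then show ?thesis by simp
qed

lemma integrable_indicator_density: "A \<in> sets borel \<Longrightarrow> integrable lborel (\<lambda>x. indicator A x * f x)"
  using integrable_mult_indicator[OF _ integrable_density] by simp

definition tail :: "real \<Rightarrow> real" where
  "tail x = (LBINT s:{x<..}. f s)"

lemma tail_eq_integral: "tail x = (LINT s|lborel. indicator {x<..} s * f s)"
  unfolding tail_def set_lebesgue_integral_def by simp

lemma nn_integral_tail: "ennreal (tail x) = (\<integral>\<^sup>+s. ennreal (indicator {x<..} s * f s) \<partial>lborel)"
  unfolding tail_eq_integral using density_nonneg
  by (subst nn_integral_eq_integral) (auto intro!: integrable_indicator_density)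

lemma tail_nonneg: "0 \<le> tail x"
  unfolding tail_eq_integral using density_nonneg by (intro integral_nonneg_AE AE_I2) simp

lemma integral_atMost_density: "(LBINT s:{..x}. f s) = 1 - tail x"
proof -
  have "(LBINT s:{..x}. f s) + tail x
      = (LINT s|lborel. indicator {..x} s * f s) + (LINT s|lborel. indicator {x<..} s * f s)"
    unfolding tail_eq_integral set_lebesgue_integral_def by simp
  also have "\<dots> = (LINT s|lborel. indicator {..x} s * f s + indicator {x<..} s * f s)"
    by (intro Bochner_Integration.integral_add[symmetric] integrable_indicator_density) auto
  also have "\<dots> = (LINT s|lborel. f s)"
    by (intro Bochner_Integration.integral_cong) (auto simp: indicator_def)
  finally show ?thesis using integral_density by simp
qed

lemma tail_le_1: "tail x \<le> 1"
proof -
  have "0 \<le> (LBINT s:{..x}. f s)"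
    unfolding set_lebesgue_integral_def using density_nonneg by (intro integral_nonneg_AE AE_I2) simp
  then show ?thesis by (simp add: integral_atMost_density)
qed

lemma tail_diff:
  assumes "x \<le> y"
  shows "tail x - tail y = (LINT s|lborel. indicator {x<..y} s * f s)"
proof -
  have "tail x - tail y = (LINT s|lborel. indicator {x<..} s * f s - indicator {y<..} s * f s)"
    unfolding tail_eq_integral
    by (rule Bochner_Integration.integral_diff[symmetric]) (auto intro!: integrable_indicator_density)
  also have "\<dots> = (LINT s|lborel. indicator {x<..y} s * f s)"
    using assms by (intro Bochner_Integration.integral_cong) (auto simp: indicator_def)
  finally show ?thesis .
qed

lemma tail_antimono:
  assumes "x \<le> y"
  shows "tail y \<le> tail x"
proof -
  have "0 \<le> (LINT s|lborel. indicator {x<..y} s * f s)"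
    using density_nonneg by (intro integral_nonneg_AE AE_I2) simp
  then show ?thesis using tail_diff[OF assms] by simp
qed

lemma borel_measurable_tail [measurable]: "tail \<in> borel_measurable borel"
proof -
  have "mono (\<lambda>x. - tail x)"
    using tail_antimono by (auto simp: mono_def)
  then have "(\<lambda>x. - (- tail x)) \<in> borel_measurable borel"
    by (intro borel_measurable_uminus borel_measurable_mono)
  then show ?thesis by simp
qed

lemma tail_powr_le_if_density_powr_le:
  assumes a: "0 < a" and x: "0 < x" and le: "\<And>s. x < s \<Longrightarrow> f s * s powr (a + 1) \<le> c"
  shows "tail x * x powr a \<le> c / a"
proof -
  have le': "f s \<le> c * s powr (- (a + 1))" if "x < s" for s
    using le[OF that] that x powr_minus_divide[of s "a + 1"] by (simp add: pos_le_divide_eq)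
  have "0 \<le> c * (x + 1) powr (- (a + 1))"
    using le'[of "x + 1"] density_nonneg[of "x + 1"] by simp
  then have c: "0 \<le> c"
    using x by (simp add: zero_le_mult_iff)
  have "ennreal (tail x) \<le> (\<integral>\<^sup>+s. ennreal c * ennreal (indicator {x<..} s * s powr (- (a + 1))) \<partial>lborel)"
    unfolding nn_integral_tail using le' c
    by (intro nn_integral_mono) (auto simp: indicator_def ennreal_mult[symmetric])
  also have "\<dots> = ennreal c * ennreal (x powr (- a) / a)"
    by (subst nn_integral_cmult) (use nn_integral_powr_tail[OF a x] in auto)
  also have "\<dots> = ennreal (c * (x powr (- a) / a))"
    by (rule ennreal_mult[symmetric]) (use a c in auto)
  finally have "tail x \<le> c * (x powr (- a) / a)"
    using a c by (simp add: ennreal_le_iff)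
  then show ?thesis
    using a x by (simp add: powr_minus field_simps)
qed

lemma tail_powr_ge_if_density_powr_ge:
  assumes a: "0 < a" and x: "0 < x" and ge: "\<And>s. x < s \<Longrightarrow> c \<le> f s * s powr (a + 1)"
  shows "c / a \<le> tail x * x powr a"
proof (cases "0 \<le> c")
  case True
  have ge': "c * s powr (- (a + 1)) \<le> f s" if "x < s" for s
    using ge[OF that] that x powr_minus_divide[of s "a + 1"] by (simp add: pos_divide_le_eq)
  have "ennreal (c * (x powr (- a) / a)) = ennreal c * ennreal (x powr (- a) / a)"
    by (rule ennreal_mult) (use a True in auto)
  also have "\<dots> = (\<integral>\<^sup>+s. ennreal c * ennreal (indicator {x<..} s * s powr (- (a + 1))) \<partial>lborel)"
    by (subst nn_integral_cmult) (use nn_integral_powr_tail[OF a x] in auto)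
  also have "\<dots> \<le> ennreal (tail x)"
    unfolding nn_integral_tail using ge' True
    by (intro nn_integral_mono) (auto simp: indicator_def ennreal_mult[symmetric] intro!: ennreal_leI)
  finally have "c * (x powr (- a) / a) \<le> tail x"
    using tail_nonneg by (simp add: ennreal_le_iff)
  then show ?thesis
    using a x by (simp add: powr_minus field_simps)
next
  case False
  then show ?thesis
    using a x tail_nonneg[of x] by (simp add: divide_nonpos_pos order_trans[OF _ mult_nonneg_nonneg])
qed

lemma tail_asymp_if_density_asymp:
  assumes a: "0 < a" and lim: "((\<lambda>t. f t * t powr (a + 1)) \<longlongrightarrow> c) at_top"
  shows "((\<lambda>x. tail x * x powr a) \<longlongrightarrow> c / a) at_top"
proof (rule order_tendstoI)
  fix y assume "y < c / a"
  then obtain y' where y': "y < y'" "y' * a < c"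
    using a dense by (metis pos_less_divide_eq)
  obtain X where X: "\<And>t. X \<le> t \<Longrightarrow> y' * a < f t * t powr (a + 1)"
    using order_tendstoD(1)[OF lim y'(2)] by (auto simp: eventually_at_top_linorder)
  have "y' * a / a \<le> tail x * x powr a" if x: "max X 0 < x" for x
    by (rule tail_powr_ge_if_density_powr_ge) (use a x X in \<open>auto intro: less_imp_le\<close>)
  then have "y < tail x * x powr a" if "max X 0 < x" for x
    using that a y'(1) by fastforce
  then show "eventually (\<lambda>x. y < tail x * x powr a) at_top"
    using eventually_gt_at_top[of "max X 0"] by (auto elim: eventually_mono)
next
  fix y assume "c / a < y"
  then obtain y' where y': "y' < y" "c < y' * a"
    using a dense by (metis pos_divide_less_eq)
  obtain X where X: "\<And>t. X \<le> t \<Longrightarrow> f t * t powr (a + 1) < y' * a"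
    using order_tendstoD(2)[OF lim y'(2)] by (auto simp: eventually_at_top_linorder)
  have "tail x * x powr a \<le> y' * a / a" if x: "max X 0 < x" for x
    by (rule tail_powr_le_if_density_powr_le) (use a x X in \<open>auto intro: less_imp_le\<close>)
  then have "tail x * x powr a < y" if "max X 0 < x" for x
    using that a y'(1) by fastforce
  then show "eventually (\<lambda>x. tail x * x powr a < y) at_top"
    using eventually_gt_at_top[of "max X 0"] by (auto elim: eventually_mono)
qed

text \<open>For independent \<open>S\<close>, \<open>T\<close> with density \<open>f\<close>: \<open>sum_tail h = P(S + T > h)\<close> and
  \<open>half_sum_tail h = P(S + T > h, T \<le> h/2)\<close>.\<close>

definition sum_tail :: "real \<Rightarrow> real" where
  "sum_tail h = (LINT t|lborel. tail (h - t) * f t)"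

definition half_sum_tail :: "real \<Rightarrow> real" where
  "half_sum_tail h = (LINT t|lborel. indicator {..h / 2} t * tail (h - t) * f t)"

lemma integrable_tail_density:
  assumes [measurable]: "B \<in> sets borel"
  shows "integrable lborel (\<lambda>t. indicator B t * tail (h - t) * f t)"
proof (rule Bochner_Integration.integrable_bound[OF integrable_density])
  show "(\<lambda>t. indicator B t * tail (h - t) * f t) \<in> borel_measurable lborel"
    unfolding measurable_lborel2 by measurable
  show "AE t in lborel. norm (indicator B t * tail (h - t) * f t) \<le> norm (f t)"
    using tail_nonneg tail_le_1 density_nonneg
    by (intro AE_I2) (auto simp: indicator_def abs_mult intro: mult_left_le_one_le)
qed

lemma ennreal_integral_tail_density:
  assumes [measurable]: "B \<in> sets borel"
  shows "ennreal (LINT t|lborel. indicator B t * tail (h - t) * f t)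
       = (\<integral>\<^sup>+t. \<integral>\<^sup>+s. ennreal (of_bool (h < s + t \<and> t \<in> B) * (f s * f t)) \<partial>lborel \<partial>lborel)"
proof -
  have "ennreal (LINT t|lborel. indicator B t * tail (h - t) * f t)
      = (\<integral>\<^sup>+t. ennreal (indicator B t * tail (h - t) * f t) \<partial>lborel)"
    using tail_nonneg density_nonneg
    by (intro nn_integral_eq_integral[symmetric] integrable_tail_density AE_I2) auto
  also have "\<dots> = (\<integral>\<^sup>+t. \<integral>\<^sup>+s. ennreal (of_bool (h < s + t \<and> t \<in> B) * (f s * f t)) \<partial>lborel \<partial>lborel)"
  proof (intro nn_integral_cong)
    fix t :: real
    have "ennreal (indicator B t * tail (h - t) * f t)
        = (\<integral>\<^sup>+s. ennreal (indicator {h - t<..} s * f s) \<partial>lborel) * ennreal (indicator B t * f t)"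
      unfolding nn_integral_tail[symmetric] using tail_nonneg density_nonneg
      by (subst ennreal_mult[symmetric]) (auto simp: mult_ac)
    also have "\<dots> = (\<integral>\<^sup>+s. ennreal (indicator {h - t<..} s * f s) * ennreal (indicator B t * f t) \<partial>lborel)"
      by (rule nn_integral_multc[symmetric]) simp
    also have "\<dots> = (\<integral>\<^sup>+s. ennreal (of_bool (h < s + t \<and> t \<in> B) * (f s * f t)) \<partial>lborel)"
      using density_nonneg
      by (intro nn_integral_cong) (auto simp: indicator_def ennreal_mult[symmetric] mult_ac)
    finally show "ennreal (indicator B t * tail (h - t) * f t)
        = (\<integral>\<^sup>+s. ennreal (of_bool (h < s + t \<and> t \<in> B) * (f s * f t)) \<partial>lborel)" .
  qed
  finally show ?thesis .
qed

lemma sum_tail_nonneg: "0 \<le> sum_tail h"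
  unfolding sum_tail_def using tail_nonneg density_nonneg
  by (intro integral_nonneg_AE AE_I2) simp

lemma half_sum_tail_nonneg: "0 \<le> half_sum_tail h"
  unfolding half_sum_tail_def using tail_nonneg density_nonneg
  by (intro integral_nonneg_AE AE_I2) simp

lemma ennreal_sum_tail:
  "ennreal (sum_tail h) = (\<integral>\<^sup>+t. \<integral>\<^sup>+s. ennreal (of_bool (h < s + t) * (f s * f t)) \<partial>lborel \<partial>lborel)"
  using ennreal_integral_tail_density[of UNIV h] unfolding sum_tail_def by simp

lemma ennreal_half_sum_tail:
  "ennreal (half_sum_tail h)
     = (\<integral>\<^sup>+t. \<integral>\<^sup>+s. ennreal (of_bool (h < s + t \<and> t \<le> h / 2) * (f s * f t)) \<partial>lborel \<partial>lborel)"
  unfolding half_sum_tail_def by (subst ennreal_integral_tail_density) simp_all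

lemma ennreal_half_sum_tail_swap:
  "ennreal (half_sum_tail h)
     = (\<integral>\<^sup>+t. \<integral>\<^sup>+s. ennreal (of_bool (h < s + t \<and> s \<le> h / 2) * (f s * f t)) \<partial>lborel \<partial>lborel)"
  unfolding ennreal_half_sum_tail
  by (subst lborel_pair.Fubini') (simp_all add: add.commute mult.commute case_prod_unfold)

lemma ennreal_tail_squared:
  "(\<integral>\<^sup>+t. \<integral>\<^sup>+s. ennreal (of_bool (c < s \<and> c < t) * (f s * f t)) \<partial>lborel \<partial>lborel)
     = ennreal (tail c) * ennreal (tail c)"
proof -
  have "(\<integral>\<^sup>+s. ennreal (of_bool (c < s \<and> c < t) * (f s * f t)) \<partial>lborel)
      = (\<integral>\<^sup>+s. ennreal (indicator {c<..} s * f s) * ennreal (indicator {c<..} t * f t) \<partial>lborel)" for t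
    using density_nonneg
    by (intro nn_integral_cong) (subst ennreal_mult[symmetric]; auto simp: indicator_def mult_ac)
  also have "\<dots> t = ennreal (tail c) * ennreal (indicator {c<..} t * f t)" for t
    unfolding nn_integral_tail by (rule nn_integral_multc) simp
  finally show ?thesis
    unfolding nn_integral_tail[of c] by (simp add: nn_integral_cmult)
qed

lemma sum_tail_decomposition: "sum_tail h = 2 * half_sum_tail h + (tail (h / 2))\<^sup>2"
proof -
  have "of_bool (h < s + t) = (of_bool (h < s + t \<and> t \<le> h / 2)
      + of_bool (h < s + t \<and> s \<le> h / 2) + of_bool (h / 2 < s \<and> h / 2 < t) :: real)" for s t
    by auto
  then have split: "ennreal (of_bool (h < s + t) * (f s * f t))
      = ennreal (of_bool (h < s + t \<and> t \<le> h / 2) * (f s * f t))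
        + ennreal (of_bool (h < s + t \<and> s \<le> h / 2) * (f s * f t))
        + ennreal (of_bool (h / 2 < s \<and> h / 2 < t) * (f s * f t))" for s t
    using density_nonneg[of s] density_nonneg[of t] by (simp add: distrib_right ennreal_plus)
  have inner_add: "(\<integral>\<^sup>+t. \<integral>\<^sup>+s. ennreal (of_bool (h < s + t \<and> t \<le> h / 2) * (f s * f t))
        + ennreal (of_bool (h < s + t \<and> s \<le> h / 2) * (f s * f t)) \<partial>lborel \<partial>lborel)
      = ennreal (half_sum_tail h) + ennreal (half_sum_tail h)"
    by (subst ennreal_half_sum_tail, subst ennreal_half_sum_tail_swap)
       (rule nn_integral_lborel_nested_add; measurable)
  have "ennreal (sum_tail h) = ennreal (half_sum_tail h) + ennreal (half_sum_tail h)
      + ennreal (tail (h / 2)) * ennreal (tail (h / 2))"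
    unfolding ennreal_sum_tail split inner_add[symmetric] ennreal_tail_squared[symmetric]
    by (rule nn_integral_lborel_nested_add; measurable)
  also have "\<dots> = ennreal (half_sum_tail h + half_sum_tail h + tail (h / 2) * tail (h / 2))"
    using half_sum_tail_nonneg tail_nonneg
    by (simp only: ennreal_plus add_nonneg_nonneg mult_nonneg_nonneg ennreal_mult)
  finally have "sum_tail h = half_sum_tail h + half_sum_tail h + tail (h / 2) * tail (h / 2)"
    using sum_tail_nonneg half_sum_tail_nonneg tail_nonneg by (subst (asm) ennreal_inj) auto
  then show ?thesis
    by (simp add: power2_eq_square)
qed

lemma integrable_tail_shift_density: "integrable lborel (\<lambda>t. tail (h - t) * f t)"
  using integrable_tail_density[of UNIV h] by simp

lemma sum_tail_le_1: "sum_tail h \<le> 1"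
proof -
  have "sum_tail h \<le> (LINT t|lborel. f t)"
    unfolding sum_tail_def using tail_le_1 tail_nonneg density_nonneg
    by (intro integral_mono integrable_tail_shift_density integrable_density)
       (simp add: mult_left_le_one_le)
  then show ?thesis using integral_density by simp
qed

lemma sum_tail_diff:
  "sum_tail h - sum_tail h' = (LINT t|lborel. (tail (h - t) - tail (h' - t)) * f t)"
  unfolding sum_tail_def left_diff_distrib
  by (rule Bochner_Integration.integral_diff[symmetric]; rule integrable_tail_shift_density)

lemma tail_strict_antimono:
  assumes pos: "\<And>x. 0 < f x" and "x < y"
  shows "tail y < tail x"
proof -
  have "0 < (LINT s|lborel. indicator {x<..y} s * f s)"
    using density_nonneg pos \<open>x < y\<close>
    by (intro lborel_integral_pos[of _ x y] integrable_indicator_density) auto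
  then show ?thesis using tail_diff[of x y] \<open>x < y\<close> by simp
qed

lemma sum_tail_strict_antimono:
  assumes pos: "\<And>x. 0 < f x" and "h < h'"
  shows "sum_tail h' < sum_tail h"
proof -
  have "0 < (LINT t|lborel. (tail (h - t) - tail (h' - t)) * f t)"
  proof (rule lborel_integral_pos[of _ 0 1])
    show "integrable lborel (\<lambda>t. (tail (h - t) - tail (h' - t)) * f t)"
      unfolding left_diff_distrib by (intro Bochner_Integration.integrable_diff integrable_tail_shift_density)
    show "0 < (tail (h - t) - tail (h' - t)) * f t" for t
      using tail_strict_antimono[OF pos, of "h - t" "h' - t"] pos[of t] \<open>h < h'\<close> by simp
    then show "0 \<le> (tail (h - t) - tail (h' - t)) * f t" for t
      by (rule less_imp_le)
  qed simp
  then show ?thesis using sum_tail_diff[of h h'] by simp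
qed

lemma sum_tail_antimono:
  assumes "h \<le> h'"
  shows "sum_tail h' \<le> sum_tail h"
proof -
  have "0 \<le> (LINT t|lborel. (tail (h - t) - tail (h' - t)) * f t)"
    using tail_antimono[of "h - _" "h' - _"] density_nonneg assms
    by (intro integral_nonneg_AE AE_I2) simp
  then show ?thesis using sum_tail_diff[of h h'] by simp
qed

lemma sum_tail_pos: "(\<And>x. 0 < f x) \<Longrightarrow> 0 < sum_tail h"
  using sum_tail_strict_antimono[of h "h + 1"] sum_tail_nonneg[of "h + 1"] by simp

lemma tail_lipschitz:
  assumes bound: "\<And>x. f x \<le> C"
  shows "C-lipschitz_on UNIV tail"
proof (rule lipschitz_onI)
  show C: "0 \<le> C"
    using density_nonneg[of 0] bound[of 0] by linarith
  have diff_le: "tail x - tail y \<le> C * (y - x)" if "x \<le> y" for x y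
  proof -
    have "(LINT s|lborel. indicator {x<..y} s * f s) \<le> (LINT s|lborel. indicator {x<..y} s * C)"
      using bound that
      by (intro integral_mono integrable_indicator_density integrable_mult_left integrable_real_indicator)
         (auto simp: indicator_def)
    then show ?thesis using tail_diff[OF that] that by (simp add: mult.commute)
  qed
  show "dist (tail x) (tail y) \<le> C * dist x y" for x y
  proof (cases "x \<le> y")
    case True
    then show ?thesis using diff_le[OF True] tail_antimono[OF True] by (simp add: dist_real_def)
  next
    case False
    then have "y \<le> x" by simp
    then show ?thesis using diff_le[of y x] tail_antimono[of y x] by (simp add: dist_real_def)
  qed
qed

lemma sum_tail_lipschitz:
  assumes bound: "\<And>x. f x \<le> C"
  shows "C-lipschitz_on UNIV sum_tail"
proof (rule lipschitz_onI)
  show "0 \<le> C"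
    using density_nonneg[of 0] bound[of 0] by linarith
  fix h h' :: real
  have "dist (sum_tail h) (sum_tail h') = \<bar>LINT t|lborel. (tail (h - t) - tail (h' - t)) * f t\<bar>"
    by (simp add: dist_real_def sum_tail_diff)
  also have "\<dots> \<le> (LINT t|lborel. \<bar>(tail (h - t) - tail (h' - t)) * f t\<bar>)"
    by (rule integral_abs_bound)
  also have "\<dots> \<le> (LINT t|lborel. C * dist h h' * f t)"
  proof (intro integral_mono)
    show "integrable lborel (\<lambda>t. \<bar>(tail (h - t) - tail (h' - t)) * f t\<bar>)"
      unfolding left_diff_distrib
      by (intro integrable_abs Bochner_Integration.integrable_diff integrable_tail_shift_density)
    show "integrable lborel (\<lambda>t. C * dist h h' * f t)"
      by (intro integrable_mult_right integrable_density)
    fix t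
    have "\<bar>tail (h - t) - tail (h' - t)\<bar> \<le> C * dist h h'"
      using lipschitz_onD[OF tail_lipschitz[OF bound], of "h - t" "h' - t"] by (simp add: dist_real_def)
    then show "\<bar>(tail (h - t) - tail (h' - t)) * f t\<bar> \<le> C * dist h h' * f t"
      using density_nonneg[of t] by (simp add: abs_mult mult_right_mono)
  qed
  also have "\<dots> = C * dist h h'"
    using integral_density by simp
  finally show "dist (sum_tail h) (sum_tail h') \<le> C * dist h h'" .
qed

context
  fixes a K :: real
  assumes exponent_pos: "0 < a" and tail_const_pos: "0 < K"
    and tail_asymp: "((\<lambda>x. tail x * x powr a) \<longlongrightarrow> K) at_top"
begin

lemma eventually_tail_pos: "eventually (\<lambda>x. 0 < tail x) at_top"
  using order_tendstoD(1)[OF tail_asymp tail_const_pos] eventually_gt_at_top[of 0]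
  by eventually_elim (use tail_nonneg in \<open>auto simp: zero_less_mult_iff\<close>)

lemma tail_ratio:
  assumes g: "((\<lambda>h. g h / h) \<longlongrightarrow> c) at_top" and c: "0 < c"
  shows "((\<lambda>h. tail (g h) / tail h) \<longlongrightarrow> c powr (- a)) at_top"
proof -
  have "filterlim (\<lambda>h. g h / h * h) at_top at_top"
    by (rule filterlim_tendsto_pos_mult_at_top[OF g c filterlim_ident])
  moreover have "eventually (\<lambda>h. g h / h * h = g h) at_top"
    using eventually_gt_at_top[of 0] by eventually_elim simp
  ultimately have g_top: "filterlim g at_top at_top"
    using filterlim_cong by fastforce
  have "((\<lambda>h. tail (g h) * g h powr a / (tail h * h powr a) / (g h / h) powr a) \<longlongrightarrow> K / K / c powr a) at_top"
    using c tail_const_pos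
    by (intro tendsto_divide tendsto_powr g tail_asymp tendsto_const
        filterlim_compose[OF tail_asymp g_top, unfolded o_def]) auto
  moreover have "eventually (\<lambda>h. tail (g h) * g h powr a / (tail h * h powr a) / (g h / h) powr a
      = tail (g h) / tail h) at_top"
    using eventually_tail_pos eventually_gt_at_top[of 0] g_top[unfolded filterlim_at_top_dense, rule_format, of 0]
    by eventually_elim (simp add: powr_divide)
  ultimately have "((\<lambda>h. tail (g h) / tail h) \<longlongrightarrow> K / K / c powr a) at_top"
    by (rule Lim_transform_eventually)
  then show ?thesis
    using tail_const_pos by (simp add: powr_minus divide_inverse)
qed

lemma tail_half_ratio: "((\<lambda>h. tail (h / 2) / tail h) \<longlongrightarrow> 2 powr a) at_top"
proof -
  have "((\<lambda>h::real. h / 2 / h) \<longlongrightarrow> 1 / 2) at_top"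
    by real_asymp
  from tail_ratio[OF this] show ?thesis
    by (simp add: powr_minus_divide powr_divide)
qed

lemma tail_shift_ratio: "((\<lambda>h. tail (h - t) / tail h) \<longlongrightarrow> 1) at_top"
proof -
  have "((\<lambda>h. (h - t) / h) \<longlongrightarrow> 1) at_top"
    by real_asymp
  from tail_ratio[OF this] show ?thesis
    by simp
qed

lemma eventually_tail_shift_ratio_le:
  "eventually (\<lambda>h. \<forall>t \<le> h / 2. tail (h - t) / tail h \<le> 2 powr a + 1) at_top"
proof -
  have "eventually (\<lambda>h. tail (h / 2) / tail h < 2 powr a + 1) at_top"
    using tail_half_ratio by (rule order_tendstoD) simp
  then show ?thesis
    using eventually_tail_pos
  proof eventually_elim
    case (elim h)
    have "tail (h - t) / tail h \<le> tail (h / 2) / tail h" if "t \<le> h / 2" for t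
      using elim(2) that by (intro divide_right_mono tail_antimono) auto
    then show ?case
      using elim(1) by fastforce
  qed
qed

lemma half_sum_tail_ratio: "((\<lambda>h. half_sum_tail h / tail h) \<longlongrightarrow> 1) at_top"
proof -
  define M where "M = 2 powr a + 1"
  define S where "S = (\<lambda>h t. indicator {..h / 2} t * (tail (h - t) / tail h) * f t)"
  have "((\<lambda>h. LINT t|lborel. S h t) \<longlongrightarrow> (LINT t|lborel. f t)) at_top"
  proof (rule integral_dominated_convergence_at_top[where w="\<lambda>t. M * f t"])
    show "f \<in> borel_measurable lborel" "S h \<in> borel_measurable lborel" for h
      unfolding S_def measurable_lborel2 by measurable
    show "integrable lborel (\<lambda>t. M * f t)"
      by (intro integrable_mult_right integrable_density)
    show "AE t in lborel. ((\<lambda>h. S h t) \<longlongrightarrow> f t) at_top"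
    proof (intro AE_I2)
      fix t :: real
      have "eventually (\<lambda>h. tail (h - t) / tail h * f t = S h t) at_top"
        using eventually_ge_at_top[of "2 * t"] by eventually_elim (simp add: S_def)
      with tendsto_mult_right[OF tail_shift_ratio, of t "f t"]
      show "((\<lambda>h. S h t) \<longlongrightarrow> f t) at_top"
        by (simp add: Lim_transform_eventually)
    qed
    show "eventually (\<lambda>h. AE t in lborel. norm (S h t) \<le> M * f t) at_top"
      using eventually_tail_shift_ratio_le eventually_tail_pos
    proof eventually_elim
      case (elim h)
      have "norm (S h t) \<le> M * f t" for t
      proof (cases "t \<le> h / 2")
        case True
        then have "tail (h - t) / tail h * f t \<le> M * f t"
          using elim density_nonneg[of t] unfolding M_def by (intro mult_right_mono) auto
        then show ?thesis
          using True elim tail_nonneg[of "h - t"] density_nonneg[of t] by (simp add: S_def abs_mult)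
      qed (use density_nonneg[of t] in \<open>simp add: S_def M_def\<close>)
      then show ?case by simp
    qed
  qed
  moreover have "(LINT t|lborel. S h t) = half_sum_tail h / tail h" for h
    unfolding S_def half_sum_tail_def by (simp add: mult_ac)
  ultimately show ?thesis
    using integral_density by simp
qed

lemma sum_tail_ratio: "((\<lambda>h. sum_tail h / tail h) \<longlongrightarrow> 2) at_top"
proof -
  have tail_half: "((\<lambda>h. tail (h / 2)) \<longlongrightarrow> 0) at_top"
    using tendsto_zero_if_powr_mult_tendsto[OF exponent_pos tail_asymp]
    by (rule filterlim_compose) real_asymp
  have "((\<lambda>h. 2 * (half_sum_tail h / tail h) + tail (h / 2) / tail h * tail (h / 2))
      \<longlongrightarrow> 2 * 1 + 2 powr a * 0) at_top"
    by (intro tendsto_intros half_sum_tail_ratio tail_half_ratio tail_half)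
  moreover have "eventually (\<lambda>h. 2 * (half_sum_tail h / tail h) + tail (h / 2) / tail h * tail (h / 2)
      = sum_tail h / tail h) at_top"
    using eventually_tail_pos
    by eventually_elim (simp add: sum_tail_decomposition power2_eq_square add_divide_distrib)
  ultimately show ?thesis
    by (simp add: Lim_transform_eventually)
qed

lemma sum_tail_asymp: "((\<lambda>h. sum_tail h * h powr a) \<longlongrightarrow> 2 * K) at_top"
proof -
  have "((\<lambda>h. sum_tail h / tail h * (tail h * h powr a)) \<longlongrightarrow> 2 * K) at_top"
    by (intro tendsto_mult sum_tail_ratio tail_asymp)
  moreover have "eventually (\<lambda>h. sum_tail h / tail h * (tail h * h powr a) = sum_tail h * h powr a) at_top"
    using eventually_tail_pos by eventually_elim simp
  ultimately show ?thesis
    by (rule Lim_transform_eventually)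
qed


end

context
  assumes density_even: "\<And>x. f (- x) = f x"
begin

lemma tail_uminus: "tail (- x) = 1 - tail x"
proof -
  have "tail (- x) = (LINT s|lborel. indicator {- x<..} (- s) * f (- s))"
    unfolding tail_eq_integral by (subst lborel_integral_real_affine[where c="-1" and t=0]) auto
  also have "\<dots> = (LBINT s:{..x}. f s)"
    unfolding set_lebesgue_integral_def
    by (intro integral_cong_AE eventually_mono[OF AE_lborel_singleton[of x]])
       (auto simp: indicator_def density_even)
  finally show ?thesis
    by (simp add: integral_atMost_density)
qed

lemma integral_cdf_shift_density: "(LINT t|lborel. (LBINT s:{..t + h}. f s) * f t) = 1 - sum_tail h"
proof -
  have reflect: "(\<lambda>t. tail (- t + h) * f (- t)) = (\<lambda>t. tail (h - t) * f t)"
    by (simp add: density_even)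
  have "integrable lborel (\<lambda>t. tail (t + h) * f t)"
    using integrable_tail_shift_density[of h] lborel_integrable_real_affine_iff[of "-1" "\<lambda>t. tail (t + h) * f t" 0]
    by (simp add: density_even)
  moreover have "(LINT t|lborel. tail (t + h) * f t) = sum_tail h"
    unfolding sum_tail_def reflect[symmetric]
    by (subst lborel_integral_real_affine[where c="-1" and t=0]) auto
  ultimately show ?thesis
    using integrable_density integral_density
    by (simp add: integral_atMost_density left_diff_distrib)
qed

lemma sum_tail_uminus: "sum_tail (- h) = 1 - sum_tail h"
proof -
  have "tail (- h - t) = 1 - tail (t + h)" for t
    using tail_uminus[of "t + h"] by (simp add: algebra_simps)
  then show ?thesis
    unfolding sum_tail_def[of "- h"] integral_cdf_shift_density[symmetric]
    by (simp add: integral_atMost_density)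
qed

lemma ex1_sum_tail_eq:
  assumes pos: "\<And>x. 0 < f x" and bound: "\<And>x. f x \<le> C"
    and lim: "(sum_tail \<longlongrightarrow> 0) at_top" and r: "0 < r" "r < 1"
  shows "\<exists>!h. sum_tail h = r"
proof (rule ex_ex1I)
  have "eventually (\<lambda>h. sum_tail h < min r (1 - r)) at_top"
    using lim r by (intro order_tendstoD) auto
  then obtain B where B: "0 \<le> B" "sum_tail B < min r (1 - r)"
    unfolding eventually_at_top_linorder by (metis linorder_linear max.cobounded1 max.cobounded2)
  have "\<exists>h\<ge>- B. h \<le> B \<and> sum_tail h = r"
  proof (rule IVT2')
    show "sum_tail B \<le> r" "r \<le> sum_tail (- B)" "- B \<le> B"
      using B sum_tail_uminus[of B] by auto
    show "continuous_on {- B..B} sum_tail"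
      using lipschitz_on_continuous_on[OF sum_tail_lipschitz[OF bound]] by (rule continuous_on_subset) simp
  qed
  then show "\<exists>h. sum_tail h = r" by blast
next
  fix h h' assume "sum_tail h = r" "sum_tail h' = r"
  then show "h = h'"
    using sum_tail_strict_antimono[OF pos, of h h'] sum_tail_strict_antimono[OF pos, of h' h]
    by (cases h h' rule: linorder_cases) auto
qed

end

end

lemma asymp_equiv_inverse_of_powr_asymp:
  fixes \<phi> :: "real \<Rightarrow> real" and H :: "nat \<Rightarrow> real"
  assumes a: "0 < a" and L: "0 < L" and m: "0 < m"
    and antimono: "\<And>x y. x \<le> y \<Longrightarrow> \<phi> y \<le> \<phi> x" and pos: "\<And>x. 0 < \<phi> x"
    and \<phi>_asymp: "((\<lambda>x. \<phi> x * x powr a) \<longlongrightarrow> L) at_top"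
    and H: "((\<lambda>k. real k * \<phi> (H k)) \<longlongrightarrow> m) at_top"
  shows "H \<sim>[at_top] (\<lambda>k. (L / m) powr (1 / a) * real k powr (1 / a))"
proof -
  have "((\<lambda>k. real k * \<phi> (H k) * inverse (real k)) \<longlongrightarrow> m * 0) at_top"
    by (intro tendsto_mult H tendsto_inverse_0_at_top filterlim_real_sequentially)
  moreover have "eventually (\<lambda>k. real k * \<phi> (H k) * inverse (real k) = \<phi> (H k)) at_top"
    using eventually_gt_at_top[of "0::nat"] by eventually_elim simp
  ultimately have \<phi>H: "((\<lambda>k. \<phi> (H k)) \<longlongrightarrow> 0) at_top"
    by (simp add: Lim_transform_eventually)
  have H_top: "filterlim H at_top at_top"
    unfolding filterlim_at_top
  proof
    fix Z :: real
    show "eventually (\<lambda>k. Z \<le> H k) at_top"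
      using order_tendstoD(2)[OF \<phi>H pos[of Z]]
      by (rule eventually_mono) (meson antimono linorder_not_le less_imp_le not_le)
  qed
  have "((\<lambda>k. \<phi> (H k) * H k powr a / (real k * \<phi> (H k))) \<longlongrightarrow> L / m) at_top"
    using m by (intro tendsto_divide H filterlim_compose[OF \<phi>_asymp H_top]) auto
  then have "((\<lambda>k. (\<phi> (H k) * H k powr a / (real k * \<phi> (H k))) powr (1 / a)) \<longlongrightarrow> (L / m) powr (1 / a)) at_top"
    using L m by (intro tendsto_powr tendsto_const) auto
  moreover have "eventually (\<lambda>k. (\<phi> (H k) * H k powr a / (real k * \<phi> (H k))) powr (1 / a)
      = H k / real k powr (1 / a)) at_top"
    using eventually_gt_at_top[of "0::nat"] H_top[unfolded filterlim_at_top_dense, rule_format, of 0]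
  proof eventually_elim
    case (elim k)
    have "\<phi> (H k) * H k powr a / (real k * \<phi> (H k)) = H k powr a / real k"
      using pos[of "H k"] by simp
    then show ?case
      using elim a by (simp add: powr_divide powr_powr)
  qed
  ultimately have "((\<lambda>k. H k / real k powr (1 / a)) \<longlongrightarrow> (L / m) powr (1 / a)) at_top"
    by (rule Lim_transform_eventually)
  then show ?thesis
    using L m by (intro asymp_equivI'_const) auto
qed

lemma the_power_eq_solves_root:
  fixes F :: "real \<Rightarrow> real"
  assumes F: "\<And>h. 0 \<le> F h" and p: "0 < p" and k: "0 < k"
    and unique: "\<exists>!h. F h = p powr (1 / real k)"
  shows "F (THE h. F h ^ k = p) = p powr (1 / real k)"
proof -
  have "F h ^ k = p \<longleftrightarrow> F h = p powr (1 / real k)" for h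
  proof
    assume pow: "F h ^ k = p"
    then have "F h \<noteq> 0"
      using p k by (auto simp: power_0_left)
    then have "0 < F h"
      using F[of h] by simp
    then show "F h = p powr (1 / real k)"
      using k by (simp add: pow[symmetric] powr_realpow[symmetric] powr_powr)
  next
    assume "F h = p powr (1 / real k)"
    then show "F h ^ k = p"
      using p k by (simp add: powr_realpow[symmetric] powr_powr)
  qed
  then show ?thesis
    using theI'[OF unique] by simp
qed

lemma nn_integral_powr_exp_scaled:
  fixes b c :: real
  assumes b: "b > 0" and c: "c > 0"
  shows "(\<integral>\<^sup>+y. ennreal (indicator {0..} y * y powr (b - 1) * exp (- (c * y))) \<partial>lborel)
         = ennreal (Gamma b / c powr b)"
proof -
  define f where "f = (\<lambda>y::real. ennreal (indicator {0..} y * y powr (b - 1) / exp y))"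
  have fm: "f \<in> borel_measurable borel" unfolding f_def by measurable
  have "ennreal (Gamma b) = (\<integral>\<^sup>+y. f y \<partial>lborel)"
    unfolding f_def using Gamma_conv_nn_integral_real[OF b] by simp
  also have "\<dots> = ennreal \<bar>c\<bar> * (\<integral>\<^sup>+x. f (0 + c * x) \<partial>lborel)"
    using nn_integral_real_affine[OF fm, of c 0] c by simp
  also have "(\<integral>\<^sup>+x. f (0 + c * x) \<partial>lborel) = (\<integral>\<^sup>+x. ennreal (c powr (b - 1)) *
        ennreal (indicator {0..} x * x powr (b - 1) * exp (- (c * x))) \<partial>lborel)"
  proof (intro nn_integral_cong)
    fix x :: real
    show "f (0 + c * x) = ennreal (c powr (b - 1)) *
        ennreal (indicator {0..} x * x powr (b - 1) * exp (- (c * x)))"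
      using c unfolding f_def
      by (auto simp: indicator_def ennreal_mult'[symmetric] powr_mult exp_minus
            field_simps zero_le_mult_iff)
  qed
  also have "\<dots> = ennreal (c powr (b - 1)) * (\<integral>\<^sup>+x.
        ennreal (indicator {0..} x * x powr (b - 1) * exp (- (c * x))) \<partial>lborel)"
    by (rule nn_integral_cmult) auto
  finally have eq: "ennreal (Gamma b) = ennreal (c * c powr (b - 1)) * (\<integral>\<^sup>+x.
        ennreal (indicator {0..} x * x powr (b - 1) * exp (- (c * x))) \<partial>lborel)"
    using c by (simp add: ennreal_mult' mult.assoc)
  have cc: "c * c powr (b - 1) = c powr b" using c
    by (simp add: powr_diff powr_one)
  have pos: "c powr b > 0" using c by simp
  have "ennreal (Gamma b / c powr b) = ennreal (Gamma b) * ennreal (1 / c powr b)"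
    using pos by (simp add: ennreal_mult'[symmetric] Gamma_real_pos b less_imp_le)
  also have "\<dots> = (\<integral>\<^sup>+x. ennreal (indicator {0..} x * x powr (b - 1) * exp (- (c * x))) \<partial>lborel)
      * (ennreal (c powr b) * ennreal (1 / c powr b))"
    unfolding eq cc by (simp add: mult_ac)
  also have "ennreal (c powr b) * ennreal (1 / c powr b) = 1"
    using pos by (simp add: ennreal_mult'[symmetric])
  finally show ?thesis by simp
qed

lemma nn_integral_exp_square_scaled:
  fixes y n :: real
  assumes y: "y > 0" and n: "n > 0"
  shows "(\<integral>\<^sup>+t. ennreal (exp (- (y * t\<^sup>2 / n))) \<partial>lborel) = ennreal (sqrt (pi * n / y))"
proof -
  define \<sigma> where "\<sigma> = sqrt (n / (2 * y))"
  have sp: "\<sigma> > 0" unfolding \<sigma>_def using y n by simp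
  have s2: "\<sigma>\<^sup>2 = n / (2 * y)" unfolding \<sigma>_def using y n by simp
  have pt: "ennreal (exp (- (y * t\<^sup>2 / n))) = ennreal (sqrt (pi * n / y)) * ennreal (normal_density 0 \<sigma> t)" for t
  proof -
    have "exp (- (y * t\<^sup>2 / n)) = sqrt (pi * n / y) * normal_density 0 \<sigma> t"
      unfolding normal_density_def s2 using y n
      by (simp add: field_simps real_sqrt_divide real_sqrt_mult)
    then show ?thesis using y n by (simp add: ennreal_mult[symmetric])
  qed
  have "(\<integral>\<^sup>+t. ennreal (exp (- (y * t\<^sup>2 / n))) \<partial>lborel) =
      ennreal (sqrt (pi * n / y)) * (\<integral>\<^sup>+t. ennreal (normal_density 0 \<sigma> t) \<partial>lborel)"
    unfolding pt by (rule nn_integral_cmult) auto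
  also have "(\<integral>\<^sup>+t. ennreal (normal_density 0 \<sigma> t) \<partial>lborel) = 1"
    using sp by (subst nn_integral_eq_integral) (auto intro!: integrable_normal_density)
  finally show ?thesis by simp
qed

lemma nn_integral_student_kernel_slice:
  fixes n y :: real
  assumes n: "0 < n"
  shows "(\<integral>\<^sup>+t. ennreal (indicator {0..} y * y powr ((n + 1) / 2 - 1) * exp (- ((1 + t\<^sup>2 / n) * y))) \<partial>lborel)
       = ennreal (sqrt (pi * n) * (indicator {0..} y * y powr (n / 2 - 1) / exp y))"
proof (cases "0 < y")
  case True
  have "(\<integral>\<^sup>+t. ennreal (indicator {0..} y * y powr ((n + 1) / 2 - 1) * exp (- ((1 + t\<^sup>2 / n) * y))) \<partial>lborel)
      = (\<integral>\<^sup>+t. ennreal (y powr ((n + 1) / 2 - 1) * exp (- y)) * ennreal (exp (- (y * t\<^sup>2 / n))) \<partial>lborel)"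
  proof (intro nn_integral_cong)
    fix t :: real
    have e: "- ((1 + t\<^sup>2 / n) * y) = - y + - (y * t\<^sup>2 / n)" by (simp add: algebra_simps)
    show "ennreal (indicator {0..} y * y powr ((n + 1) / 2 - 1) * exp (- ((1 + t\<^sup>2 / n) * y)))
        = ennreal (y powr ((n + 1) / 2 - 1) * exp (- y)) * ennreal (exp (- (y * t\<^sup>2 / n)))"
      unfolding e exp_add using True by (simp add: ennreal_mult[symmetric] mult.assoc)
  qed
  also have "\<dots> = ennreal (y powr ((n + 1) / 2 - 1) * exp (- y)) * ennreal (sqrt (pi * n / y))"
    using nn_integral_exp_square_scaled[OF True n] by (simp add: nn_integral_cmult)
  also have "\<dots> = ennreal (y powr ((n + 1) / 2 - 1) * exp (- y) * sqrt (pi * n / y))"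
    by (rule ennreal_mult[symmetric]) (use True n in auto)
  also have "y powr ((n + 1) / 2 - 1) * exp (- y) * sqrt (pi * n / y)
      = sqrt (pi * n) * (y powr (n / 2 - 1) / exp y)"
  proof -
    have "y powr (- (1 / 2)) = inverse (sqrt y)"
      using True by (simp only: powr_minus powr_half_sqrt less_imp_le)
    moreover have "sqrt (pi * n / y) = sqrt (pi * n) * inverse (sqrt y)"
      by (simp add: real_sqrt_mult real_sqrt_inverse divide_inverse)
    ultimately have sqrt_eq: "sqrt (pi * n / y) = sqrt (pi * n) * y powr (- (1 / 2))"
      by simp
    have "(n + 1) / 2 - 1 + - (1 / 2) = n / 2 - 1" by (simp add: field_simps)
    then have powr_eq: "y powr ((n + 1) / 2 - 1) * y powr (- (1 / 2)) = y powr (n / 2 - 1)"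
      by (simp only: powr_add[symmetric])
    show ?thesis
      unfolding sqrt_eq powr_eq[symmetric] by (simp only: exp_minus divide_inverse mult_ac)
  qed
  finally show ?thesis using True by simp
next
  case False
  then show ?thesis by (cases "y = 0") (auto simp: indicator_def)
qed

lemma nn_integral_student_kernel:
  fixes n :: real
  assumes n: "0 < n"
  shows "(\<integral>\<^sup>+t. ennreal ((1 + t\<^sup>2 / n) powr (- ((n + 1) / 2))) \<partial>lborel)
       = ennreal (sqrt (pi * n) * Gamma (n / 2) / Gamma ((n + 1) / 2))"
proof -
  define a where "a = (n + 1) / 2"
  have a: "0 < a" unfolding a_def using n by simp
  have Ga: "0 < Gamma a" using a by (simp add: Gamma_real_pos)
  have "ennreal (Gamma a) * (\<integral>\<^sup>+t. ennreal ((1 + t\<^sup>2 / n) powr (- a)) \<partial>lborel)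
      = (\<integral>\<^sup>+t. ennreal (Gamma a * (1 + t\<^sup>2 / n) powr (- a)) \<partial>lborel)"
    by (subst nn_integral_cmult[symmetric]) (auto simp: ennreal_mult Ga less_imp_le)
  also have "\<dots> = (\<integral>\<^sup>+t. \<integral>\<^sup>+y. ennreal (indicator {0..} y * y powr (a - 1) * exp (- ((1 + t\<^sup>2 / n) * y))) \<partial>lborel \<partial>lborel)"
  proof (intro nn_integral_cong)
    fix t :: real
    have "0 < 1 + t\<^sup>2 / n" using n by (simp add: add_pos_nonneg)
    then show "ennreal (Gamma a * (1 + t\<^sup>2 / n) powr (- a)) =
      (\<integral>\<^sup>+y. ennreal (indicator {0..} y * y powr (a - 1) * exp (- ((1 + t\<^sup>2 / n) * y))) \<partial>lborel)"
      using nn_integral_powr_exp_scaled[OF a] by (simp add: powr_minus divide_inverse)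
  qed
  also have "\<dots> = (\<integral>\<^sup>+y. \<integral>\<^sup>+t. ennreal (indicator {0..} y * y powr (a - 1) * exp (- ((1 + t\<^sup>2 / n) * y))) \<partial>lborel \<partial>lborel)"
    by (subst lborel_pair.Fubini') (auto simp: case_prod_unfold)
  also have "\<dots> = (\<integral>\<^sup>+y. ennreal (sqrt (pi * n)) * ennreal (indicator {0..} y * y powr (n / 2 - 1) / exp y) \<partial>lborel)"
    unfolding a_def nn_integral_student_kernel_slice[OF n]
    using n by (intro nn_integral_cong ennreal_mult') simp
  also have "\<dots> = ennreal (sqrt (pi * n) * Gamma (n / 2))"
    using n by (simp add: nn_integral_cmult Gamma_conv_nn_integral_real ennreal_mult)
  finally have eq: "ennreal (Gamma a) * (\<integral>\<^sup>+t. ennreal ((1 + t\<^sup>2 / n) powr (- a)) \<partial>lborel)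
      = ennreal (sqrt (pi * n) * Gamma (n / 2))" .
  have "ennreal (1 / Gamma a) * ennreal (Gamma a) = 1"
    using Ga by (subst ennreal_mult[symmetric]) auto
  then have "(\<integral>\<^sup>+t. ennreal ((1 + t\<^sup>2 / n) powr (- a)) \<partial>lborel)
      = ennreal (1 / Gamma a) * ennreal (sqrt (pi * n) * Gamma (n / 2))"
    unfolding eq[symmetric] mult.assoc[symmetric] by simp
  also have "\<dots> = ennreal (sqrt (pi * n) * Gamma (n / 2) / Gamma a)"
    using Ga n by (subst ennreal_mult[symmetric]) (auto simp: Gamma_real_pos less_imp_le)
  finally show ?thesis unfolding a_def .
qed

definition student_t_const :: "nat \<Rightarrow> real" where
  "student_t_const \<nu> = Gamma ((real \<nu> + 1) / 2) / (sqrt (real \<nu> * pi) * Gamma (real \<nu> / 2))"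

lemma student_t_pdf_eq:
  "student_t_pdf \<nu> t = student_t_const \<nu> * (1 + t\<^sup>2 / real \<nu>) powr (- ((real \<nu> + 1) / 2))"
  unfolding student_t_pdf_def student_t_const_def by (simp add: minus_divide_left)

lemma borel_measurable_student_t_pdf [measurable]: "student_t_pdf \<nu> \<in> borel_measurable borel"
  unfolding student_t_pdf_eq[abs_def] by measurable

lemma student_t_pdf_uminus: "student_t_pdf \<nu> (- t) = student_t_pdf \<nu> t"
  unfolding student_t_pdf_eq by simp

context
  fixes \<nu> :: nat
  assumes \<nu>: "1 \<le> \<nu>"
begin

lemma student_t_const_pos: "0 < student_t_const \<nu>"
  unfolding student_t_const_def using \<nu> by (auto intro!: divide_pos_pos mult_pos_pos Gamma_real_pos)

lemma student_t_pdf_pos: "0 < student_t_pdf \<nu> t"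
proof -
  have "0 < 1 + t\<^sup>2 / real \<nu>"
    by (simp add: add_pos_nonneg)
  then show ?thesis
    unfolding student_t_pdf_eq using student_t_const_pos by simp
qed

lemma student_t_pdf_le_const: "student_t_pdf \<nu> t \<le> student_t_const \<nu>"
proof -
  have "1 \<le> 1 + t\<^sup>2 / real \<nu>" by simp
  then have "(1 + t\<^sup>2 / real \<nu>) powr (- ((real \<nu> + 1) / 2)) \<le> 1"
    by (subst powr_minus) (auto intro!: ge_one_powr_ge_zero simp: inverse_le_1_iff)
  then show ?thesis
    unfolding student_t_pdf_eq using student_t_const_pos by (simp add: mult_left_le)
qed

lemma nn_integral_student_t_pdf: "(\<integral>\<^sup>+t. ennreal (student_t_pdf \<nu> t) \<partial>lborel) = 1"
proof -
  have n: "0 < real \<nu>" using \<nu> by simp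
  have "(\<integral>\<^sup>+t. ennreal (student_t_pdf \<nu> t) \<partial>lborel)
      = ennreal (student_t_const \<nu>) * (\<integral>\<^sup>+t. ennreal ((1 + t\<^sup>2 / real \<nu>) powr (- ((real \<nu> + 1) / 2))) \<partial>lborel)"
    unfolding student_t_pdf_eq using student_t_const_pos
    by (subst nn_integral_cmult[symmetric]) (auto simp: ennreal_mult)
  also have "\<dots> = ennreal (student_t_const \<nu> * (sqrt (pi * real \<nu>) * Gamma (real \<nu> / 2) / Gamma ((real \<nu> + 1) / 2)))"
    unfolding nn_integral_student_kernel[OF n] using student_t_const_pos n
    by (subst ennreal_mult) (auto intro!: divide_nonneg_pos Gamma_real_pos)
  also have "student_t_const \<nu> * (sqrt (pi * real \<nu>) * Gamma (real \<nu> / 2) / Gamma ((real \<nu> + 1) / 2)) = 1"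
    unfolding student_t_const_def using n
    by (simp add: field_simps Gamma_real_pos real_sqrt_mult less_imp_neq[symmetric])
  finally show ?thesis by simp
qed

lemma real_density_student_t: "real_density (student_t_pdf \<nu>)"
  using student_t_pdf_pos nn_integral_student_t_pdf by unfold_locales (auto intro: less_imp_le)

lemma student_t_pdf_asymp:
  "((\<lambda>t. student_t_pdf \<nu> t * t powr (real \<nu> + 1))
     \<longlongrightarrow> student_t_const \<nu> * real \<nu> powr ((real \<nu> + 1) / 2)) at_top"
proof -
  have n: "0 < real \<nu>" using \<nu> by simp
  have "((\<lambda>t. (1 + t\<^sup>2 / real \<nu>) powr (- ((real \<nu> + 1) / 2)) * t powr (real \<nu> + 1))
      \<longlongrightarrow> inverse (real \<nu>) powr (- ((real \<nu> + 1) / 2))) at_top"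
    using n by real_asymp
  then show ?thesis
    unfolding student_t_pdf_eq mult.assoc using n
    by (intro tendsto_mult_left) (simp add: powr_minus inverse_powr)
qed

lemma gamma_nu_powr:
  "gamma_nu \<nu> powr real \<nu> = student_t_const \<nu> * real \<nu> powr ((real \<nu> + 1) / 2) / real \<nu>"
proof -
  define n where "n = real \<nu>"
  have n: "0 < n" unfolding n_def using \<nu> by simp
  have "n powr ((n + 1) / 2) / n = n powr ((n + 1) / 2 - 1)"
    using n by (subst powr_diff) simp
  also have "(n + 1) / 2 - 1 = 1 / 2 - (1 - n / 2)"
    by (simp add: field_simps)
  also have "n powr (1 / 2 - (1 - n / 2)) = n powr (1 / 2) / n powr (1 - n / 2)"
    by (rule powr_diff)
  finally have pow_eq: "n powr ((n + 1) / 2) / n = sqrt n / n powr (1 - n / 2)"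
    using n by (simp add: powr_half_sqrt)
  have "student_t_const \<nu> * n powr ((n + 1) / 2) / n
      = Gamma ((n + 1) / 2) / (sqrt n * sqrt pi * Gamma (n / 2)) * (sqrt n / n powr (1 - n / 2))"
    unfolding times_divide_eq_right[symmetric] pow_eq student_t_const_def n_def[symmetric]
    by (simp add: real_sqrt_mult)
  also have "\<dots> = Gamma ((n + 1) / 2) / (n powr (1 - n / 2) * sqrt pi * Gamma (n / 2))"
    using n by (simp add: field_simps)
  finally have "student_t_const \<nu> * n powr ((n + 1) / 2) / n
      = Gamma ((n + 1) / 2) / (n powr (1 - n / 2) * sqrt pi * Gamma (n / 2))" .
  moreover have "0 < Gamma ((n + 1) / 2) / (n powr (1 - n / 2) * sqrt pi * Gamma (n / 2))"
    using n by (auto intro!: divide_pos_pos mult_pos_pos Gamma_real_pos)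
  ultimately show ?thesis
    unfolding gamma_nu_def n_def[symmetric] using n by (simp add: powr_powr)
qed

lemma gamma_nu_pos: "0 < gamma_nu \<nu>"
proof -
  have "0 < Gamma ((real \<nu> + 1) / 2)" "0 < Gamma (real \<nu> / 2)"
    using \<nu> by (auto intro!: Gamma_real_pos)
  then have "Gamma ((real \<nu> + 1) / 2) \<noteq> 0" "Gamma (real \<nu> / 2) \<noteq> 0"
    by (metis less_irrefl)+
  then show ?thesis
    unfolding gamma_nu_def using \<nu> by simp
qed

interpretation student_t: real_density "student_t_pdf \<nu>"
  by (rule real_density_student_t)

lemma student_t_sum_tail_asymp:
  "((\<lambda>h. student_t.sum_tail h * h powr real \<nu>) \<longlongrightarrow> 2 * gamma_nu \<nu> powr real \<nu>) at_top"
proof (rule student_t.sum_tail_asymp)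
  show "0 < real \<nu>" "0 < gamma_nu \<nu> powr real \<nu>"
    using \<nu> gamma_nu_pos by auto
  show "((\<lambda>x. student_t.tail x * x powr real \<nu>) \<longlongrightarrow> gamma_nu \<nu> powr real \<nu>) at_top"
    unfolding gamma_nu_powr using \<nu> student_t_pdf_asymp
    by (intro student_t.tail_asymp_if_density_asymp) auto
qed

lemma student_t_sum_tail_h2:
  assumes p: "0 < p" "p < 1" and k: "1 \<le> k"
  shows "student_t.sum_tail (h2 \<nu> p k) = 1 - p powr (1 / real k)"
proof -
  have "p powr (1 / real k) < 1 powr (1 / real k)"
    using p k by (intro powr_less_mono2) auto
  then have r: "0 < 1 - p powr (1 / real k)" "1 - p powr (1 / real k) < 1"
    using p by auto
  have "1 - student_t.sum_tail h = p powr (1 / real k) \<longleftrightarrow> student_t.sum_tail h = 1 - p powr (1 / real k)"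
    for h by linarith
  moreover have "\<exists>!h. student_t.sum_tail h = 1 - p powr (1 / real k)"
    using \<nu> student_t_sum_tail_asymp
    by (intro student_t.ex1_sum_tail_eq[OF student_t_pdf_uminus student_t_pdf_pos student_t_pdf_le_const]
        tendsto_zero_if_powr_mult_tendsto r) auto
  ultimately have "1 - student_t.sum_tail (h2 \<nu> p k) = p powr (1 / real k)"
    unfolding h2_def student_t_cdf_def student_t.integral_cdf_shift_density[OF student_t_pdf_uminus]
    using student_t.sum_tail_le_1 p k by (intro the_power_eq_solves_root) auto
  then show ?thesis by simp
qed

end

lemma frechet_quantile_eq:
  assumes "1 \<le> \<nu>" "0 < p" "p < 1"
  shows "frechet_quantile \<nu> p = (- ln p) powr (- (1 / real \<nu>))"
  unfolding frechet_quantile_def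
proof (rule the_equality)
  have "0 < - ln p" using assms by simp
  then show "0 < (- ln p) powr (- (1 / real \<nu>))
      \<and> exp (- (((- ln p) powr (- (1 / real \<nu>))) powr (- real \<nu>))) = p"
    using assms by (simp add: powr_powr)
next
  fix q assume q: "0 < q \<and> exp (- (q powr (- real \<nu>))) = p"
  then have "(- ln p) powr (- (1 / real \<nu>)) = (q powr (- real \<nu>)) powr (- (1 / real \<nu>))"
    by auto
  also have "\<dots> = q"
    using q assms by (simp add: powr_powr)
  finally show "q = (- ln p) powr (- (1 / real \<nu>))" ..
qed

lemma frechet_scaling_constant:
  assumes "1 \<le> \<nu>" "0 < p" "p < 1"
  shows "(2 * gamma_nu \<nu> powr real \<nu> / - ln p) powr (1 / real \<nu>)
       = 2 powr (1 / real \<nu>) * gamma_nu \<nu> * frechet_quantile \<nu> p"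
proof -
  define m where "m = - ln p"
  have "0 < m" unfolding m_def using assms by simp
  moreover have "(gamma_nu \<nu> powr real \<nu>) powr (1 / real \<nu>) = gamma_nu \<nu>"
    using assms gamma_nu_pos[OF assms(1)] by (simp add: powr_powr)
  ultimately show ?thesis
    unfolding frechet_quantile_eq[OF assms] m_def[symmetric]
    by (simp add: powr_divide powr_mult powr_minus divide_inverse inverse_powr)
qed

theorem theorem5:
  fixes \<nu> :: nat and p :: real
  assumes "\<nu> \<ge> 1" and "0 < p" and "p < 1"
  shows "(\<lambda>k. h2 \<nu> p k) \<sim>[at_top]
         (\<lambda>k. 2 powr (1 / real \<nu>) * gamma_nu \<nu> * real k powr (1 / real \<nu>) * frechet_quantile \<nu> p)"
proof -
  have \<nu>: "1 \<le> \<nu>" using assms by simp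
  interpret student_t: real_density "student_t_pdf \<nu>"
    by (rule real_density_student_t[OF \<nu>])
  have "((\<lambda>k::nat. real k * (1 - p powr (1 / real k))) \<longlongrightarrow> - ln p) at_top"
    using assms by real_asymp
  moreover have "eventually (\<lambda>k. real k * (1 - p powr (1 / real k))
      = real k * student_t.sum_tail (h2 \<nu> p k)) at_top"
    using eventually_ge_at_top[of 1]
    by eventually_elim (simp add: student_t_sum_tail_h2[OF \<nu> assms(2,3)])
  ultimately have "h2 \<nu> p \<sim>[at_top]
      (\<lambda>k. (2 * gamma_nu \<nu> powr real \<nu> / - ln p) powr (1 / real \<nu>) * real k powr (1 / real \<nu>))"
    using assms gamma_nu_pos[OF \<nu>] student_t_sum_tail_asymp[OF \<nu>] student_t.sum_tail_antimono
      student_t.sum_tail_pos[OF student_t_pdf_pos[OF \<nu>]]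
    by (intro asymp_equiv_inverse_of_powr_asymp) (auto elim: Lim_transform_eventually)
  then show ?thesis
    unfolding frechet_scaling_constant[OF \<nu> assms(2,3)] by (simp add: mult_ac)
qed

end
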